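(* Let $g\colon\mathbb X\to\mathbb Y$ be twice continuously differentiable, $D\subset\mathbb Y$ closed, $\Phi(x):=g(x)-D$, $(\bar x,0)\in\operatorname{gph}\Phi$ and $u\in\mathbb S_{\mathbb X}$. Assume (A) if $\nabla g(\bar x)^*y^*=0$, $\nabla^2\langle y^*,g\rangle(\bar x)(u)+\nabla g(\bar x)^*z^*=0$, $y^*\in\mathcal N_D(g(\bar x);\nabla g(\bar x)u)$, $z^*\in D\mathcal N_D(g(\bar x),y^* )(\nabla g(\bar x)u)$, then $y^*=0$; and assume (B1) or, in case $\nabla g(\bar x)u\ne0$, (B2), where (B1) if $\nabla g(\bar x)^*y^*=0$, $\nabla g(\bar x)^*\hat z^*=0$, $y^*\in\mathcal N_D(g(\bar x);\nabla g(\bar x)u)$, $\hat z^*\in D\mathcal N_D(g(\bar x),y^* )(0)$, then $\hat z^*=0$; (B2) if $\nabla g(\bar x)^*y^*=0$, $\nabla g(\bar x)^*\hat z^*=0$, $y^*\in\mathcal N_D(g(\bar x);\nabla g(\bar x)u)$, then $\hat z^*\notin D_{\mathrm{sub}}\mathcal N_D(g(\bar x),y^* )(\nabla g(\bar x)u/\|\nabla g(\bar x)u\|)$. Consider the system (S): $x^*=\nabla^2\langle y^*,g\rangle(\bar x)(u)+\nabla g(\bar x)^*z^*$, $y^*\in\mathcal N_D(g(\bar x);\nabla g(\bar x)u)\cap\ker\nabla g(\bar x)^*$, $z^*\in D\mathcal N_D(g(\bar x),y^* )(\nabla g(\bar x)u)$. (i) If for every $x^*\in\mathbb X$, $y^*,z^*\in\mathbb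 Y$ satisfying (S) there is $\lambda\in\mathcal N_D(g(\bar x))$ with $x^*=\nabla g(\bar x)^*\lambda$, then $\Phi$ is asymptotically regular at $(\bar x,0)$ in direction $u$. (ii) If for every $x^*,y^*,z^*$ satisfying (S) there is $\lambda\in\mathcal N_D(g(\bar x);\nabla g(\bar x)u)$ with $x^*=\nabla g(\bar x)^*\lambda$, then $\Phi$ is strongly asymptotically regular at $(\bar x,0)$ in direction $u$.
   Context: $\nabla g(\bar x)^*$ adjoint of derivative; $\nabla^2\langle y^*,g\rangle(\bar x)$ Hessian of $x\mapsto\langle y^*,g(x)\rangle$, applied to $u$. $\mathcal N_D(y)$ limiting normal cone; $\mathcal N_D(y;w)$ directional limiting normal cone (limits of $\eta_k\in\widehat{\mathcal N}_D(y+t_kw_k)$, $w_k\to w$, $t_k\searrow0$). $\mathcal N_D$ viewed as set-valued map $y\mapsto\mathcal N_D(y)$; $D\mathcal N_D(y,y^* )$ its graphical derivative: $z^*\in D\mathcal N_D(y,y^* )(q)$ iff $(q,z^* )$ lies in the Bouligand tangent cone to $\operatorname{gph}\mathcal N_D$ at $(y,y^* )$. Graphical subderivative of a map $\Psi$ at $(a,b)\in\operatorname{gph}\Psi$: $D_{\mathrm{sub}}\Psi(a,b)(q)$, $q$ a unit vector, is the set of unit vectors $w$ for which there are $q_k\to q$, $w_k\to w$, $t_k\searrow0$, $\tau_k\searrow0$, $\tau_k/t_k\to\infty$ with $(a+t_kq_k,b+\tau_kw_k)\in\operatorname{gph}\Psi$. (Strong) asymptotic regularity in direction $u$ at $(\bar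 x,\bar y)$: for all $\{(x_k,y_k)\}\subset\operatorname{gph}\Phi$, $\{x_k^*\}$, $\{\lambda_k\}$, $x^*,y^*$ with $x_k\notin\Phi^{-1}(\bar y)$, $y_k\ne\bar y$, $x_k^*\in\widehat D^*\Phi(x_k,y_k)(\lambda_k)$ (regular coderivative), $x_k\to\bar x$, $y_k\to\bar y$, $x_k^*\to x^*$, $(x_k-\bar x)/\|x_k-\bar x\|\to u$, $(y_k-\bar y)/\|x_k-\bar x\|\to0$, $\|\lambda_k\|\to\infty$, $(y_k-\bar y)/\|y_k-\bar y\|-\lambda_k/\|\lambda_k\|\to0$, $(\|y_k-\bar y\|/\|x_k-\bar x\|)\lambda_k\to y^*$, one has $x^*\in\operatorname{Im}D^*\Phi(\bar x,\bar y)$ (resp. $x^*\in\operatorname{Im}D^*\Phi((\bar x,\bar y);(u,0))$, the directional limiting coderivative, for strong), where $\operatorname{Im}\Psi=\bigcup_z\Psi(z)$. *)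

theory Defs
  imports "HOL-Analysis.Analysis"
begin

definition rnormal :: "'a::euclidean_space set \<Rightarrow> 'a \<Rightarrow> 'a set" where
  "rnormal A x = {v. x \<in> A \<and> (\<forall>e>0. \<exists>d>0. \<forall>y\<in>A. dist y x < d \<longrightarrow> inner v (y - x) \<le> e * norm (y - x))}"

definition lnormal :: "'a::euclidean_space set \<Rightarrow> 'a \<Rightarrow> 'a set" where
  "lnormal A x = {v. \<exists>xs vs. (\<forall>k. vs k \<in> rnormal A (xs k)) \<and> xs \<longlonglongrightarrow> x \<and> vs \<longlonglongrightarrow> v}"

definition dnormal :: "'a::euclidean_space set \<Rightarrow> 'a \<Rightarrow> 'a \<Rightarrow> 'a set" where
  "dnormal A x w = {v. \<exists>ts ws vs. (\<forall>k. ts k > 0) \<and> ts \<longlonglongrightarrow> 0 \<and> ws \<longlonglongrightarrow> w \<and>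
      (\<forall>k. vs k \<in> rnormal A (x + ts k *\<^sub>R ws k)) \<and> vs \<longlonglongrightarrow> v}"

definition tcone :: "'a::euclidean_space set \<Rightarrow> 'a \<Rightarrow> 'a set" where
  "tcone A z = {w. \<exists>ts ws. (\<forall>k. ts k > 0) \<and> ts \<longlonglongrightarrow> 0 \<and> ws \<longlonglongrightarrow> w \<and> (\<forall>k. z + ts k *\<^sub>R ws k \<in> A)}"

definition gph_normal :: "'a::euclidean_space set \<Rightarrow> ('a \<times> 'a) set" where
  "gph_normal D = {(y, ys). ys \<in> lnormal D y}"

definition gderiv_normal :: "'a::euclidean_space set \<Rightarrow> 'a \<Rightarrow> 'a \<Rightarrow> 'a \<Rightarrow> 'a set" where
  "gderiv_normal D y ys q = {zs. (q, zs) \<in> tcone (gph_normal D) (y, ys)}"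

definition gsubderiv :: "('a::euclidean_space \<times> 'b::euclidean_space) set \<Rightarrow> 'a \<Rightarrow> 'b \<Rightarrow> 'a \<Rightarrow> 'b set" where
  "gsubderiv G a b q = {w. norm w = 1 \<and> (\<exists>qs ws ts taus.
      qs \<longlonglongrightarrow> q \<and> ws \<longlonglongrightarrow> w \<and> (\<forall>k. ts k > 0) \<and> ts \<longlonglongrightarrow> 0 \<and>
      (\<forall>k. taus k > 0) \<and> taus \<longlonglongrightarrow> 0 \<and> filterlim (\<lambda>k. taus k / ts k) at_top sequentially \<and>
      (\<forall>k. (a + ts k *\<^sub>R qs k, b + taus k *\<^sub>R ws k) \<in> G))}"

definition rcoderiv :: "('a::euclidean_space \<times> 'b::euclidean_space) set \<Rightarrow> 'a \<Rightarrow> 'b \<Rightarrow> 'b \<Rightarrow> 'a set" where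
  "rcoderiv G x y lam = {xs. (xs, - lam) \<in> rnormal G (x, y)}"

definition lcoderiv :: "('a::euclidean_space \<times> 'b::euclidean_space) set \<Rightarrow> 'a \<Rightarrow> 'b \<Rightarrow> 'b \<Rightarrow> 'a set" where
  "lcoderiv G x y lam = {xs. (xs, - lam) \<in> lnormal G (x, y)}"

definition dcoderiv :: "('a::euclidean_space \<times> 'b::euclidean_space) set \<Rightarrow> 'a \<Rightarrow> 'b \<Rightarrow> 'a \<Rightarrow> 'b \<Rightarrow> 'b \<Rightarrow> 'a set" where
  "dcoderiv G x y u v lam = {xs. (xs, - lam) \<in> dnormal G (x, y) (u, v)}"

definition asymp_reg_gen :: "('a::euclidean_space \<times> 'b::euclidean_space) set \<Rightarrow> 'a \<Rightarrow> 'b \<Rightarrow> 'a \<Rightarrow> 'a set \<Rightarrow> bool" where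
  "asymp_reg_gen G xb yb u C \<longleftrightarrow>
    (\<forall>(xk::nat \<Rightarrow> 'a) (yk::nat \<Rightarrow> 'b) (xsk::nat \<Rightarrow> 'a) (lam::nat \<Rightarrow> 'b) xs ys.
       (\<forall>k. (xk k, yk k) \<in> G) \<and> (\<forall>k. (xk k, yb) \<notin> G) \<and> (\<forall>k. yk k \<noteq> yb) \<and>
       (\<forall>k. xsk k \<in> rcoderiv G (xk k) (yk k) (lam k)) \<and>
       xk \<longlonglongrightarrow> xb \<and> yk \<longlonglongrightarrow> yb \<and> xsk \<longlonglongrightarrow> xs \<and>
       (\<lambda>k. (1 / norm (xk k - xb)) *\<^sub>R (xk k - xb)) \<longlonglongrightarrow> u \<and>
       (\<lambda>k. (1 / norm (xk k - xb)) *\<^sub>R (yk k - yb)) \<longlonglongrightarrow> 0 \<and>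
       filterlim (\<lambda>k. norm (lam k)) at_top sequentially \<and>
       (\<lambda>k. (1 / norm (yk k - yb)) *\<^sub>R (yk k - yb) - (1 / norm (lam k)) *\<^sub>R lam k) \<longlonglongrightarrow> 0 \<and>
       (\<lambda>k. (norm (yk k - yb) / norm (xk k - xb)) *\<^sub>R lam k) \<longlonglongrightarrow> ys
     \<longrightarrow> xs \<in> C)"

definition asymp_regular :: "('a::euclidean_space \<times> 'b::euclidean_space) set \<Rightarrow> 'a \<Rightarrow> 'b \<Rightarrow> 'a \<Rightarrow> bool" where
  "asymp_regular G xb yb u \<longleftrightarrow> asymp_reg_gen G xb yb u (\<Union>lam. lcoderiv G xb yb lam)"

definition strong_asymp_regular :: "('a::euclidean_space \<times> 'b::euclidean_space) set \<Rightarrow> 'a \<Rightarrow> 'b \<Rightarrow> 'a \<Rightarrow> bool" where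
  "strong_asymp_regular G xb yb u \<longleftrightarrow> asymp_reg_gen G xb yb u (\<Union>lam. dcoderiv G xb yb u 0 lam)"

end

theory Submission
  imports Defs
begin

text \<open>Take sequences as in the definition of asymptotic regularity: x_k \<rightarrow> xb from direction u,
  regular normals lam_k of D at g x_k - y_k, and x*_k = \<nabla>g(x_k)* lam_k \<rightarrow> x*. With t_k = |x_k - xb|
  and nu_k = t_k lam_k one has \<nabla>g(xb)* nu_k / t_k = x*_k - ((\<nabla>g(x_k) - \<nabla>g(xb)) / t_k)* nu_k, and the
  last operator tends to g''(xb) u. If (nu_k) were unbounded, its normalized limit would be a nonzero
  multiplier excluded by (A); so nu_k \<rightarrow> y* along a subsequence. The quotients (nu_k - y*) / t_k then
  converge to some z* in the graphical derivative, unless they blow up, and a blow-up direction is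
  excluded by (B1) or (B2). Hence x* solves (S), and the hypotheses of (i) and (ii) turn the solution
  into an element of the (directional) limiting coderivative of the graph, computed by the chain rule
  for regular normals of the preimage {(x, y). g x - y \<in> D}.\<close>

lemma rnormal_imp_mem: "v \<in> rnormal A x \<Longrightarrow> x \<in> A"
  by (simp add: rnormal_def)

lemma rnormal_imp_lnormal: "v \<in> rnormal A x \<Longrightarrow> v \<in> lnormal A x"
  unfolding lnormal_def by (intro CollectI exI[of _ "\<lambda>k. x"] exI[of _ "\<lambda>k. v"]) auto

lemma rnormal_scaleR:
  assumes v: "v \<in> rnormal A x" and c: "c \<ge> 0"
  shows "c *\<^sub>R v \<in> rnormal A x"
proof (cases "c = 0")
  case True
  then show ?thesis using rnormal_imp_mem[OF v] by (auto simp: rnormal_def)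
next
  case False
  with c have c: "c > 0" by simp
  show ?thesis
    unfolding rnormal_def
  proof (intro CollectI conjI allI impI rnormal_imp_mem[OF v])
    fix e :: real assume "e > 0"
    with c v obtain d where "d > 0"
      and d: "\<forall>y\<in>A. dist y x < d \<longrightarrow> inner v (y - x) \<le> (e / c) * norm (y - x)"
      unfolding rnormal_def by (auto dest!: spec[of _ "e / c"])
    have "inner (c *\<^sub>R v) (y - x) \<le> e * norm (y - x)" if "y \<in> A" "dist y x < d" for y
      using mult_left_mono[OF d[rule_format, OF that] less_imp_le[OF c]] c by simp
    with \<open>d > 0\<close> show "\<exists>d>0. \<forall>y\<in>A. dist y x < d \<longrightarrow> inner (c *\<^sub>R v) (y - x) \<le> e * norm (y - x)"
      by blast
  qed
qed

lemma rnormal_UNIV: "v \<in> rnormal UNIV x \<Longrightarrow> v = 0"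
proof (rule ccontr)
  assume v: "v \<in> rnormal UNIV x" and "v \<noteq> 0"
  then have nv: "norm v > 0" by simp
  with v obtain d where "d > 0" and d: "\<And>y. dist y x < d \<Longrightarrow> inner v (y - x) \<le> norm v / 2 * norm (y - x)"
    unfolding rnormal_def by (auto dest!: spec[of _ "norm v / 2"])
  define y where "y = x + (d / 2 / norm v) *\<^sub>R v"
  have "norm (y - x) = d / 2" using nv \<open>d > 0\<close> by (simp add: y_def)
  moreover have "inner v (y - x) = d / 2 * norm v"
    using nv by (simp add: y_def power2_norm_eq_inner[symmetric] power2_eq_square)
  ultimately show False
    using d[of y] nv \<open>d > 0\<close> by (simp add: dist_norm)
qed

lemma has_derivative_imp_local_lipschitz:
  assumes "(f has_derivative f') (at x)"
  obtains K d where "K > 0" "d > 0" "\<And>y. norm (y - x) < d \<Longrightarrow> norm (f y - f x) \<le> K * norm (y - x)"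
proof -
  have "bounded_linear f'"
    and rem: "\<forall>e>0. \<exists>d>0. \<forall>y. norm (y - x) < d \<longrightarrow> norm (f y - f x - f' (y - x)) \<le> e * norm (y - x)"
    using assms by (simp_all add: has_derivative_at_alt)
  then obtain K where K: "K > 0" "\<And>h. norm (f' h) \<le> norm h * K"
    using bounded_linear.pos_bounded by blast
  obtain d where "d > 0" and d: "\<And>y. norm (y - x) < d \<Longrightarrow> norm (f y - f x - f' (y - x)) \<le> norm (y - x)"
    using rem[rule_format, of 1] by auto
  have "norm (f y - f x) \<le> (K + 1) * norm (y - x)" if "norm (y - x) < d" for y
    using norm_triangle_ineq[of "f' (y - x)" "f y - f x - f' (y - x)"] K(2)[of "y - x"] d[OF that]
    by (simp add: algebra_simps)
  with K(1) \<open>d > 0\<close> show thesis by (intro that[of "K + 1" d]) auto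
qed

lemma rnormal_pullback:
  fixes F :: "'a::euclidean_space \<Rightarrow> 'b::euclidean_space"
  assumes F: "(F has_derivative F') (at p)"
    and maps: "F ` S \<subseteq> A" and p: "p \<in> S"
    and v: "v \<in> rnormal A (F p)"
    and w: "\<And>h. w \<bullet> h = v \<bullet> F' h"
  shows "w \<in> rnormal S p"
  unfolding rnormal_def
proof (intro CollectI conjI p allI impI)
  fix e :: real assume e: "e > 0"
  obtain K d0 where K: "K > 0" and "d0 > 0"
    and lip: "\<And>q. norm (q - p) < d0 \<Longrightarrow> norm (F q - F p) \<le> K * norm (q - p)"
    using has_derivative_imp_local_lipschitz[OF F] by blast
  define e1 where "e1 = e / (2 * K)"
  define e2 where "e2 = e / (2 * (norm v + 1))"
  have "e1 > 0" "e2 > 0" using e K by (simp_all add: e1_def e2_def add_nonneg_pos)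
  obtain d1 where "d1 > 0" and d1: "\<And>y. y \<in> A \<Longrightarrow> dist y (F p) < d1 \<Longrightarrow> v \<bullet> (y - F p) \<le> e1 * norm (y - F p)"
    using v \<open>e1 > 0\<close> unfolding rnormal_def by (auto dest!: spec[of _ e1])
  obtain d2 where "d2 > 0" and d2: "\<And>q. norm (q - p) < d2 \<Longrightarrow> norm (F q - F p - F' (q - p)) \<le> e2 * norm (q - p)"
    using F \<open>e2 > 0\<close> unfolding has_derivative_at_alt by (auto dest!: spec[of _ e2])
  show "\<exists>d>0. \<forall>q\<in>S. dist q p < d \<longrightarrow> w \<bullet> (q - p) \<le> e * norm (q - p)"
  proof (intro exI[of _ "min d0 (min d2 (d1 / K))"] conjI ballI impI)
    show "min d0 (min d2 (d1 / K)) > 0" using \<open>d0 > 0\<close> \<open>d1 > 0\<close> \<open>d2 > 0\<close> K by simp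
    fix q assume "q \<in> S" and "dist q p < min d0 (min d2 (d1 / K))"
    then have q: "norm (q - p) < d0" "norm (q - p) < d2" "K * norm (q - p) < d1"
      using K by (simp_all add: dist_norm pos_less_divide_eq mult.commute)
    have "v \<bullet> (F q - F p) \<le> e1 * norm (F q - F p)"
      using d1[of "F q"] maps \<open>q \<in> S\<close> lip[OF q(1)] q(3) by (force simp: dist_norm)
    also have "\<dots> \<le> e1 * (K * norm (q - p))"
      using lip[OF q(1)] \<open>e1 > 0\<close> by (simp add: mult_left_mono)
    also have "\<dots> = e / 2 * norm (q - p)"
      using K by (simp add: e1_def)
    finally have main: "v \<bullet> (F q - F p) \<le> e / 2 * norm (q - p)" .
    have "v \<bullet> (F' (q - p) - (F q - F p)) \<le> norm v * norm (F q - F p - F' (q - p))"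
      by (metis Cauchy_Schwarz_ineq2 abs_le_D1 norm_minus_commute)
    also have "\<dots> \<le> norm v * (e2 * norm (q - p))"
      by (simp add: d2[OF q(2)] mult_left_mono)
    also have "\<dots> \<le> e / 2 * norm (q - p)"
    proof -
      have "norm v * e2 \<le> e / 2"
        using e by (simp add: e2_def pos_divide_le_eq add_nonneg_pos)
      from mult_right_mono[OF this norm_ge_zero[of "q - p"]] show ?thesis
        by (simp add: mult.assoc)
    qed
    finally have remainder: "v \<bullet> (F' (q - p) - (F q - F p)) \<le> e / 2 * norm (q - p)" .
    have "w \<bullet> (q - p) = v \<bullet> (F q - F p) + v \<bullet> (F' (q - p) - (F q - F p))"
      by (simp add: w inner_diff_right linear_diff[OF has_derivative_linear[OF F]])
    also have "\<dots> \<le> e * norm (q - p)"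
      using main remainder by simp
    finally show "w \<bullet> (q - p) \<le> e * norm (q - p)" .
  qed
qed

(* Both directions are instances of rnormal_pullback: "<=" pulls back along (x, y) \<mapsto> g x - y,
   "=>" along the maps y' \<mapsto> (x, g x - y') and x' \<mapsto> (x', y + g x' - g x) into the graph. *)
lemma rnormal_graph_iff:
  fixes g :: "'a::euclidean_space \<Rightarrow> 'b::euclidean_space"
  assumes g: "(g has_derivative g') (at x)"
  shows "(xs, - lam) \<in> rnormal {(x, y). g x - y \<in> D} (x, y) \<longleftrightarrow>
    lam \<in> rnormal D (g x - y) \<and> xs = adjoint g' lam"
    (is "_ \<in> rnormal ?G _ \<longleftrightarrow> _")
proof -
  have lin: "linear g'" using g by (rule has_derivative_linear)
  show ?thesis
  proof
    assume N: "(xs, - lam) \<in> rnormal ?G (x, y)"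
    have lam: "lam \<in> rnormal D (g x - y)"
    proof (rule rnormal_pullback[where F="\<lambda>y'. (x, g x - y')" and F'="\<lambda>k. (0, - k)" and A="?G" and v="(xs, - lam)"])
      show "((\<lambda>y'. (x, g x - y')) has_derivative (\<lambda>k. (0, - k))) (at (g x - y))"
        by (auto intro!: derivative_eq_intros)
      show "g x - y \<in> D" using rnormal_imp_mem[OF N] by simp
    qed (use N in auto)
    have "xs - adjoint g' lam \<in> rnormal UNIV x"
    proof (rule rnormal_pullback[where F="\<lambda>x'. (x', y + (g x' - g x))" and F'="\<lambda>h. (h, g' h)" and A="?G" and v="(xs, - lam)"])
      show "((\<lambda>x'. (x', y + (g x' - g x))) has_derivative (\<lambda>h. (h, g' h))) (at x)"
        by (auto intro!: derivative_eq_intros g)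
    qed (use N rnormal_imp_mem[OF N] in \<open>auto simp: inner_diff_left adjoint_clauses[OF lin]\<close>)
    then show "lam \<in> rnormal D (g x - y) \<and> xs = adjoint g' lam"
      using lam rnormal_UNIV by fastforce
  next
    assume "lam \<in> rnormal D (g x - y) \<and> xs = adjoint g' lam"
    then show "(xs, - lam) \<in> rnormal ?G (x, y)"
    proof (intro rnormal_pullback[where F="\<lambda>(x, y). g x - y" and F'="\<lambda>(h, k). g' h - k" and v=lam], elim conjE)
      have "((\<lambda>p. g (fst p)) has_derivative (\<lambda>p. g' (fst p))) (at (x, y))"
        by (rule has_derivative_compose[OF has_derivative_fst[OF has_derivative_ident]]) (simp add: g)
      then show "((\<lambda>(x, y). g x - y) has_derivative (\<lambda>(h, k). g' h - k)) (at (x, y))"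
        unfolding case_prod_beta' by (auto intro!: derivative_eq_intros)
    qed (auto simp: adjoint_clauses[OF lin] inner_diff_right dest: rnormal_imp_mem)
  qed
qed

lemma tendsto_difference_quotient:
  fixes f :: "'a::real_normed_vector \<Rightarrow> 'b::real_normed_vector"
  assumes df: "(f has_derivative f') (at x)"
    and xk: "xk \<longlonglongrightarrow> x" "\<And>k. xk k \<noteq> x"
    and dir: "(\<lambda>k. (1 / norm (xk k - x)) *\<^sub>R (xk k - x)) \<longlonglongrightarrow> u"
  shows "(\<lambda>k. (1 / norm (xk k - x)) *\<^sub>R (f (xk k) - f x)) \<longlonglongrightarrow> f' u"
proof -
  have lin: "linear f'" using df by (rule has_derivative_linear)
  have rem: "((\<lambda>h. norm (f (x + h) - f x - f' h) / norm h) \<longlongrightarrow> 0) (at 0)"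
    using df by (simp add: has_derivative_at)
  have hk: "filterlim (\<lambda>k. xk k - x) (at 0) sequentially"
    using xk by (auto simp: filterlim_at intro!: LIM_zero)
  have "(\<lambda>k. norm (f (x + (xk k - x)) - f x - f' (xk k - x)) / norm (xk k - x)) \<longlonglongrightarrow> 0"
    using filterlim_compose[OF rem hk] by (simp add: o_def)
  then have "(\<lambda>k. norm ((1 / norm (xk k - x)) *\<^sub>R (f (xk k) - f x - f' (xk k - x)))) \<longlonglongrightarrow> 0"
    by (simp add: divide_inverse mult.commute)
  then have "(\<lambda>k. (1 / norm (xk k - x)) *\<^sub>R (f (xk k) - f x - f' (xk k - x))) \<longlonglongrightarrow> 0"
    by (rule tendsto_norm_zero_cancel)
  then have "(\<lambda>k. (1 / norm (xk k - x)) *\<^sub>R (f (xk k) - f x - f' (xk k - x))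
      + f' ((1 / norm (xk k - x)) *\<^sub>R (xk k - x))) \<longlonglongrightarrow> 0 + f' u"
    by (rule tendsto_add[OF _ bounded_linear.tendsto[OF has_derivative_bounded_linear[OF df] dir]])
  also have "(\<lambda>k. (1 / norm (xk k - x)) *\<^sub>R (f (xk k) - f x - f' (xk k - x))
      + f' ((1 / norm (xk k - x)) *\<^sub>R (xk k - x))) = (\<lambda>k. (1 / norm (xk k - x)) *\<^sub>R (f (xk k) - f x))"
    by (simp add: linear_diff[OF lin] linear_scale[OF lin] algebra_simps)
  finally show ?thesis
    by simp
qed

lemma tendsto_line_difference_quotient:
  fixes f :: "'a::real_normed_vector \<Rightarrow> 'b::real_normed_vector"
  assumes df: "(f has_derivative f') (at x)"
    and t: "\<And>k. t k > 0" "t \<longlonglongrightarrow> 0"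
  shows "(\<lambda>k. (1 / t k) *\<^sub>R (f (x + t k *\<^sub>R u) - f x)) \<longlonglongrightarrow> f' u"
proof -
  have "((\<lambda>s. x + s *\<^sub>R u) has_derivative (\<lambda>s. s *\<^sub>R u)) (at 0)"
    by (auto intro!: derivative_eq_intros)
  moreover have "(f has_derivative f') (at (x + 0 *\<^sub>R u))"
    using df by simp
  ultimately have line: "((\<lambda>s. f (x + s *\<^sub>R u)) has_derivative (\<lambda>s. f' (s *\<^sub>R u))) (at 0)"
    by (rule has_derivative_compose)
  have "(\<lambda>k. (1 / norm (t k - 0)) *\<^sub>R (t k - 0)) = (\<lambda>k. 1)"
    using t(1) by (simp add: abs_of_pos less_imp_neq[symmetric])
  then have "(\<lambda>k. (1 / norm (t k - 0)) *\<^sub>R (t k - 0)) \<longlonglongrightarrow> 1"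
    by simp
  from tendsto_difference_quotient[OF line t(2) _ this] t(1) show ?thesis
    by (simp add: less_imp_neq[symmetric] abs_of_pos)
qed

lemma unbounded_imp_normalized_subseq:
  fixes f :: "nat \<Rightarrow> 'a::euclidean_space"
  assumes "\<not> bounded (range f)"
  obtains s e where "strict_mono s" "norm e = 1" "\<And>n. f (s n) \<noteq> 0"
    "filterlim (\<lambda>n. norm (f (s n))) at_top sequentially"
    "(\<lambda>n. (1 / norm (f (s n))) *\<^sub>R f (s n)) \<longlonglongrightarrow> e"
proof -
  have big: "\<exists>k>N. norm (f k) > M" for N M
  proof (rule ccontr)
    assume "\<not> ?thesis"
    then have "norm (f k) \<le> max M (Max (norm ` f ` {..N}))" for k
      by (cases "k \<le> N") (auto intro: le_max_iff_disj[THEN iffD2] Max_ge simp: not_less)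
    then show False using assms by (auto simp: bounded_iff)
  qed
  have "\<exists>r. \<forall>n. norm (f (r n)) > real n \<and> r n < r (Suc n)"
  proof (rule dependent_nat_choice)
    show "\<exists>k. norm (f k) > real 0" using big[of 0 0] by auto
    show "\<exists>k'. norm (f k') > real (Suc n) \<and> k < k'" for k n using big[of k "real (Suc n)"] by auto
  qed
  then obtain r where r: "strict_mono r" "\<And>n. norm (f (r n)) > real n"
    by (auto simp: strict_mono_Suc_iff)
  define f' where "f' n = (1 / norm (f (r n))) *\<^sub>R f (r n)" for n
  have nz: "f (r n) \<noteq> 0" for n using r(2)[of n] by (auto simp: not_less[symmetric])
  then have "norm (f' n) = 1" for n by (simp add: f'_def)
  then have "bounded (range f')"
    by (auto simp: bounded_iff)
  then obtain r' e where r': "strict_mono r'" "(f' \<circ> r') \<longlonglongrightarrow> e"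
    using bounded_imp_convergent_subsequence by blast
  have "norm e = 1"
    using tendsto_norm[OF r'(2)] \<open>\<And>n. norm (f' n) = 1\<close> by (simp add: o_def LIMSEQ_const_iff)
  moreover have "filterlim (\<lambda>n. norm (f ((r \<circ> r') n))) at_top sequentially"
  proof (rule filterlim_at_top_mono[OF filterlim_real_sequentially always_eventually], rule allI)
    show "real n \<le> norm (f ((r \<circ> r') n))" for n
      using seq_suble[OF r'(1), of n] r(2)[of "r' n"] by simp
  qed
  ultimately show thesis
    using r' nz by (intro that[of "r \<circ> r'" e] strict_mono_o r(1)) (auto simp: f'_def o_def)
qed

lemma linear_blinfun_apply: "linear (blinfun_apply A)"
  by (rule bounded_linear.linear[OF blinfun.bounded_linear_right])

lemma tendsto_adjoint_blinfun:
  fixes M :: "nat \<Rightarrow> 'a::euclidean_space \<Rightarrow>\<^sub>L 'b::euclidean_space"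
  assumes "M \<longlonglongrightarrow> M0" "vs \<longlonglongrightarrow> v"
  shows "(\<lambda>n. adjoint (blinfun_apply (M n)) (vs n)) \<longlonglongrightarrow> adjoint (blinfun_apply M0) v"
proof -
  have "(\<lambda>n. vs n \<bullet> blinfun_apply (M n) i) \<longlonglongrightarrow> v \<bullet> blinfun_apply M0 i" for i
    by (rule tendsto_inner[OF assms(2) blinfun.tendsto[OF assms(1) tendsto_const]])
  then show ?thesis
    by (subst tendsto_componentwise_iff) (simp add: adjoint_clauses linear_blinfun_apply)
qed

lemma adjoint_blinfun_add_scaleR:
  fixes A B :: "'a::euclidean_space \<Rightarrow>\<^sub>L 'b::euclidean_space"
  shows "adjoint (blinfun_apply A) v + adjoint (blinfun_apply B) (c *\<^sub>R v) = adjoint (blinfun_apply (A + c *\<^sub>R B)) v"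
  by (rule euclidean_eqI) (simp add: adjoint_clauses linear_blinfun_apply inner_add_left inner_add_right
      blinfun.add_left blinfun.scaleR_left)

(* The x* solving the system (S) of the theorem, for L = \<nabla>g(xb)* and P = (g''(xb) u)*. *)
definition second_order_duals ::
    "('b::euclidean_space \<Rightarrow> 'a::euclidean_space) \<Rightarrow> ('b \<Rightarrow> 'a) \<Rightarrow> 'b set \<Rightarrow> 'b \<Rightarrow> 'b \<Rightarrow> 'a set" where
  "second_order_duals L P D y w =
    {P ys + L zs | ys zs. ys \<in> dnormal D y w \<and> L ys = 0 \<and> zs \<in> gderiv_normal D y ys w}"

definition no_normal_blowup ::
    "('b::euclidean_space \<Rightarrow> 'a::euclidean_space) \<Rightarrow> 'b set \<Rightarrow> 'b \<Rightarrow> 'b \<Rightarrow> bool" where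
  "no_normal_blowup L D y w \<longleftrightarrow>
    (\<nexists>ys zh. ys \<in> dnormal D y w \<and> L ys = 0 \<and> L zh = 0 \<and> norm zh = 1 \<and>
      zh \<in> gderiv_normal D y ys 0 \<and> (w \<noteq> 0 \<longrightarrow> zh \<in> gsubderiv (gph_normal D) y ys ((1 / norm w) *\<^sub>R w)))"

lemma no_normal_blowupI:
  assumes "(\<forall>ys zh. L ys = 0 \<and> L zh = 0 \<and> ys \<in> dnormal D y w \<and> zh \<in> gderiv_normal D y ys 0 \<longrightarrow> zh = 0)
    \<or> (w \<noteq> 0 \<and> (\<forall>ys zh. L ys = 0 \<and> L zh = 0 \<and> ys \<in> dnormal D y w \<longrightarrow>
          zh \<notin> gsubderiv (gph_normal D) y ys ((1 / norm w) *\<^sub>R w)))"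
  shows "no_normal_blowup L D y w"
  using assms unfolding no_normal_blowup_def by force

lemma second_order_duals_subsetI:
  assumes "\<forall>xs ys zs. xs = P ys + L zs \<and> ys \<in> dnormal D y w \<and> L ys = 0 \<and> zs \<in> gderiv_normal D y ys w
      \<longrightarrow> (\<exists>lam \<in> N. xs = L lam)"
  shows "second_order_duals L P D y w \<subseteq> L ` N"
  using assms unfolding second_order_duals_def by blast

lemma graph_blowup_direction:
  fixes G :: "('a::euclidean_space \<times> 'b::euclidean_space) set"
  assumes t: "\<And>k. t k > 0" "t \<longlonglongrightarrow> 0"
    and tau: "\<And>k. tau k > 0" "tau \<longlonglongrightarrow> 0"
    and ratio: "filterlim (\<lambda>k. tau k / t k) at_top sequentially"
    and qs: "qs \<longlonglongrightarrow> w" and zs: "zs \<longlonglongrightarrow> z"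
    and G: "\<And>k. (a + t k *\<^sub>R qs k, b + tau k *\<^sub>R zs k) \<in> G"
  shows "(0, z) \<in> tcone G (a, b)"
    and "w \<noteq> 0 \<Longrightarrow> norm z = 1 \<Longrightarrow> z \<in> gsubderiv G a b ((1 / norm w) *\<^sub>R w)"
proof -
  have "(\<lambda>k. inverse (tau k / t k)) \<longlonglongrightarrow> 0"
    by (rule tendsto_inverse_0_at_top[OF ratio])
  then have "(\<lambda>k. (t k / tau k) *\<^sub>R qs k) \<longlonglongrightarrow> 0 *\<^sub>R w"
    by (intro tendsto_scaleR qs) simp
  then have "(\<lambda>k. ((t k / tau k) *\<^sub>R qs k, zs k)) \<longlonglongrightarrow> (0, z)"
    by (intro tendsto_Pair zs) simp
  moreover have "(a, b) + tau k *\<^sub>R ((t k / tau k) *\<^sub>R qs k, zs k) \<in> G" for k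
    using G[of k] tau(1)[of k] by (simp add: less_imp_neq[symmetric])
  ultimately show "(0, z) \<in> tcone G (a, b)"
    unfolding tcone_def using tau by blast
next
  assume "w \<noteq> 0" "norm z = 1"
  then have w: "norm w > 0" by simp
  have "filterlim (\<lambda>k. (1 / norm w) * (tau k / t k)) at_top sequentially"
    by (rule filterlim_tendsto_pos_mult_at_top[OF tendsto_const _ ratio]) (use w in simp)
  moreover have "(1 / norm w) * (tau k / t k) = tau k / (t k * norm w)" for k
    by simp
  ultimately have "filterlim (\<lambda>k. tau k / (t k * norm w)) at_top sequentially"
    by (simp add: mult.commute)
  moreover have "(\<lambda>k. (1 / norm w) *\<^sub>R qs k) \<longlonglongrightarrow> (1 / norm w) *\<^sub>R w"
    by (intro tendsto_scaleR qs tendsto_const)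
  moreover have "(\<lambda>k. t k * norm w) \<longlonglongrightarrow> 0 * norm w"
    by (intro tendsto_mult t tendsto_const)
  moreover have "(a + (t k * norm w) *\<^sub>R ((1 / norm w) *\<^sub>R qs k), b + tau k *\<^sub>R zs k) \<in> G" for k
    using G[of k] w by simp
  ultimately show "z \<in> gsubderiv G a b ((1 / norm w) *\<^sub>R w)"
    unfolding gsubderiv_def using \<open>norm z = 1\<close> t tau w zs
    by (intro CollectI conjI exI[of _ "\<lambda>k. (1 / norm w) *\<^sub>R qs k"] exI[of _ zs]
        exI[of _ "\<lambda>k. t k * norm w"] exI[of _ tau]) auto
qed

lemma normal_limit_in_kernel:
  fixes L :: "'b::euclidean_space \<Rightarrow> 'a::euclidean_space"
  assumes lin: "linear L" and blowup: "no_normal_blowup L D y w"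
    and t: "\<And>k. t k > 0" "t \<longlonglongrightarrow> 0"
    and d: "(\<lambda>k. (1 / t k) *\<^sub>R (d k - y)) \<longlonglongrightarrow> w"
    and nu: "\<And>k. nu k \<in> rnormal D (d k)" "nu \<longlonglongrightarrow> ys"
    and Lnu: "(\<lambda>k. (1 / t k) *\<^sub>R L (nu k)) \<longlonglongrightarrow> a"
  obtains zs where "ys \<in> dnormal D y w" "L ys = 0" "zs \<in> gderiv_normal D y ys w" "L zs = a"
proof -
  have L_tendsto: "(\<lambda>n. L (f n)) \<longlonglongrightarrow> L l" if "f \<longlonglongrightarrow> l" for f l
    using lin that by (simp add: linear_conv_bounded_linear bounded_linear.tendsto)
  have tne: "t k \<noteq> 0" for k using t(1)[of k] by simp
  define q where "q k = (1 / t k) *\<^sub>R (d k - y)" for k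
  define zeta where "zeta k = (1 / t k) *\<^sub>R (nu k - ys)" for k
  have d_eq: "d k = y + t k *\<^sub>R q k" for k by (simp add: q_def tne)
  have nu_eq: "nu k = ys + t k *\<^sub>R zeta k" for k by (simp add: zeta_def tne)
  have gph: "(y + t k *\<^sub>R q k, ys + t k *\<^sub>R zeta k) \<in> gph_normal D" for k
    using rnormal_imp_lnormal[OF nu(1)] by (simp add: gph_normal_def flip: d_eq nu_eq)
  have dn: "ys \<in> dnormal D y w"
    unfolding dnormal_def using t d[folded q_def] nu
    by (intro CollectI exI[of _ t] exI[of _ q] exI[of _ nu]) (simp flip: d_eq)
  have "(\<lambda>k. t k *\<^sub>R ((1 / t k) *\<^sub>R L (nu k))) \<longlonglongrightarrow> 0 *\<^sub>R a"
    by (intro tendsto_scaleR t Lnu)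
  then have "(\<lambda>k. L (nu k)) \<longlonglongrightarrow> 0"
    by (simp add: tne)
  moreover have "(\<lambda>k. L (nu k)) \<longlonglongrightarrow> L ys"
    by (rule L_tendsto[OF nu(2)])
  ultimately have Lys: "L ys = 0"
    using LIMSEQ_unique by blast
  have Lzeta: "(\<lambda>k. L (zeta k)) \<longlonglongrightarrow> a"
    using Lnu Lys by (simp add: zeta_def linear_scale[OF lin] linear_diff[OF lin])
  have "bounded (range zeta)"
  proof (rule ccontr)
    assume "\<not> bounded (range zeta)"
    from unbounded_imp_normalized_subseq[OF this] obtain s e where s: "strict_mono s" "norm e = 1" "\<And>n. zeta (s n) \<noteq> 0"
      and infty: "filterlim (\<lambda>n. norm (zeta (s n))) at_top sequentially"
      and e: "(\<lambda>n. (1 / norm (zeta (s n))) *\<^sub>R zeta (s n)) \<longlonglongrightarrow> e"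
      by blast
    define tau where "tau n = t (s n) * norm (zeta (s n))" for n
    have tau_eq: "tau n = norm (nu (s n) - ys)" for n
      using t(1)[of "s n"] by (simp add: tau_def nu_eq)
    have tau_pos: "tau n > 0" for n
      using t(1)[of "s n"] s(3)[of n] by (simp add: tau_def)
    have "(\<lambda>n. tau n) \<longlonglongrightarrow> 0"
      unfolding tau_eq using LIMSEQ_subseq_LIMSEQ[OF nu(2) s(1)]
      by (simp add: o_def tendsto_norm_zero_iff LIM_zero_iff)
    moreover have "filterlim (\<lambda>n. tau n / t (s n)) at_top sequentially"
      using infty by (simp add: tau_def tne)
    moreover have "(y + t (s n) *\<^sub>R q (s n), ys + tau n *\<^sub>R ((1 / norm (zeta (s n))) *\<^sub>R zeta (s n)))
        \<in> gph_normal D" for n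
      using gph[of "s n"] s(3)[of n] by (simp add: tau_def)
    ultimately have "(0, e) \<in> tcone (gph_normal D) (y, ys)"
      and "w \<noteq> 0 \<Longrightarrow> e \<in> gsubderiv (gph_normal D) y ys ((1 / norm w) *\<^sub>R w)"
      using graph_blowup_direction[where t="t \<circ> s" and qs="q \<circ> s", OF _ _ tau_pos _ _ _ e]
        t LIMSEQ_subseq_LIMSEQ[OF t(2) s(1)] LIMSEQ_subseq_LIMSEQ[OF d[folded q_def] s(1)] s(2)
      by (simp_all add: o_def)
    moreover have "L e = 0"
    proof -
      have "(\<lambda>n. (1 / norm (zeta (s n))) *\<^sub>R L (zeta (s n))) \<longlonglongrightarrow> 0 *\<^sub>R a"
        using tendsto_inverse_0_at_top[OF infty] LIMSEQ_subseq_LIMSEQ[OF Lzeta s(1)]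
        by (intro tendsto_scaleR) (simp_all add: o_def divide_inverse)
      moreover have "(\<lambda>n. L ((1 / norm (zeta (s n))) *\<^sub>R zeta (s n))) \<longlonglongrightarrow> L e"
        by (rule L_tendsto[OF e])
      ultimately show ?thesis
        by (simp add: linear_scale[OF lin] LIMSEQ_unique)
    qed
    ultimately show False
      using blowup dn Lys s(2) unfolding no_normal_blowup_def gderiv_normal_def by blast
  qed
  then obtain r z where r: "strict_mono r" "(zeta \<circ> r) \<longlonglongrightarrow> z"
    using bounded_imp_convergent_subsequence by blast
  have "z \<in> gderiv_normal D y ys w"
    unfolding gderiv_normal_def tcone_def
  proof (intro CollectI exI conjI allI)
    show "(t \<circ> r) k > 0" for k using t(1) by simp
    show "(t \<circ> r) \<longlonglongrightarrow> 0" by (rule LIMSEQ_subseq_LIMSEQ[OF t(2) r(1)])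
    show "(\<lambda>k. (q (r k), zeta (r k))) \<longlonglongrightarrow> (w, z)"
      using LIMSEQ_subseq_LIMSEQ[OF d[folded q_def] r(1)] r(2) by (auto intro!: tendsto_Pair simp: o_def)
    show "(y, ys) + (t \<circ> r) k *\<^sub>R (q (r k), zeta (r k)) \<in> gph_normal D" for k
      using gph[of "r k"] by simp
  qed
  moreover have "L z = a"
    using LIMSEQ_subseq_LIMSEQ[OF Lzeta r(1)] L_tendsto[OF r(2)] by (simp add: o_def LIMSEQ_unique)
  ultimately show thesis
    using dn Lys that by blast
qed

lemma multiplier_limit_in_second_order_duals:
  fixes Gx H :: "'a::euclidean_space \<Rightarrow>\<^sub>L 'b::euclidean_space" and M :: "nat \<Rightarrow> 'a \<Rightarrow>\<^sub>L 'b"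
  assumes A: "\<And>ys zs. adjoint (blinfun_apply Gx) ys = 0 \<Longrightarrow>
      adjoint (blinfun_apply H) ys + adjoint (blinfun_apply Gx) zs = 0 \<Longrightarrow>
      ys \<in> dnormal D y w \<Longrightarrow> zs \<in> gderiv_normal D y ys w \<Longrightarrow> ys = 0"
    and blowup: "no_normal_blowup (adjoint (blinfun_apply Gx)) D y w"
    and t: "\<And>k. t k > 0" "t \<longlonglongrightarrow> 0"
    and d: "(\<lambda>k. (1 / t k) *\<^sub>R (d k - y)) \<longlonglongrightarrow> w"
    and lam: "\<And>k. lam k \<in> rnormal D (d k)"
    and M: "M \<longlonglongrightarrow> H"
    and xs: "(\<lambda>k. adjoint (blinfun_apply Gx) (lam k) + adjoint (blinfun_apply (M k)) (t k *\<^sub>R lam k)) \<longlonglongrightarrow> xs"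
  shows "xs \<in> second_order_duals (adjoint (blinfun_apply Gx)) (adjoint (blinfun_apply H)) D y w"
proof -
  let ?L = "adjoint (blinfun_apply Gx)" and ?P = "adjoint (blinfun_apply H)"
  have lin: "linear (adjoint (blinfun_apply A))" for A :: "'a \<Rightarrow>\<^sub>L 'b"
    by (rule adjoint_linear[OF linear_blinfun_apply])
  define nu where "nu k = t k *\<^sub>R lam k" for k
  have limit: "\<exists>zs. v \<in> dnormal D y w \<and> ?L v = 0 \<and> zs \<in> gderiv_normal D y v w \<and> ?L zs = c0 *\<^sub>R xs - ?P v"
    if s: "strict_mono s" and c: "\<And>n. c n \<ge> 0" "c \<longlonglongrightarrow> c0" and v: "(\<lambda>n. c n *\<^sub>R nu (s n)) \<longlonglongrightarrow> v"
    for s c c0 v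
  proof -
    have "(1 / t (s n)) *\<^sub>R ?L (c n *\<^sub>R nu (s n)) =
        c n *\<^sub>R (?L (lam (s n)) + adjoint (blinfun_apply (M (s n))) (nu (s n)))
        - adjoint (blinfun_apply (M (s n))) (c n *\<^sub>R nu (s n))" for n
      using t(1)[of "s n"] by (simp add: nu_def linear_scale[OF lin] scaleR_add_right)
    moreover have "(\<lambda>n. c n *\<^sub>R (?L (lam (s n)) + adjoint (blinfun_apply (M (s n))) (nu (s n)))
        - adjoint (blinfun_apply (M (s n))) (c n *\<^sub>R nu (s n))) \<longlonglongrightarrow> c0 *\<^sub>R xs - ?P v"
      using LIMSEQ_subseq_LIMSEQ[OF xs s] LIMSEQ_subseq_LIMSEQ[OF M s]
      by (intro tendsto_diff tendsto_scaleR c tendsto_adjoint_blinfun v) (simp_all add: o_def nu_def)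
    ultimately have Lnu: "(\<lambda>n. (1 / (t \<circ> s) n) *\<^sub>R ?L (c n *\<^sub>R nu (s n))) \<longlonglongrightarrow> c0 *\<^sub>R xs - ?P v"
      by simp
    have nuD: "c n *\<^sub>R nu (s n) \<in> rnormal D ((d \<circ> s) n)" for n
      using rnormal_scaleR[OF lam, of "c n * t (s n)"] t(1)[of "s n"] c(1)[of n] by (simp add: nu_def)
    have ds: "(\<lambda>n. (1 / (t \<circ> s) n) *\<^sub>R ((d \<circ> s) n - y)) \<longlonglongrightarrow> w"
      using LIMSEQ_subseq_LIMSEQ[OF d s] by (simp add: o_def)
    have ts: "(t \<circ> s) n > 0" for n
      using t(1) by simp
    from normal_limit_in_kernel[OF lin blowup ts LIMSEQ_subseq_LIMSEQ[OF t(2) s] ds nuD v Lnu]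
    show ?thesis
      by blast
  qed
  show ?thesis
  proof (cases "bounded (range nu)")
    case True
    then obtain r ys where r: "strict_mono r" "(nu \<circ> r) \<longlonglongrightarrow> ys"
      using bounded_imp_convergent_subsequence by blast
    then obtain zs where "ys \<in> dnormal D y w" "?L ys = 0" "zs \<in> gderiv_normal D y ys w" "?L zs = xs - ?P ys"
      using limit[of r "\<lambda>_. 1" 1 ys] by (auto simp: o_def)
    then show ?thesis
      unfolding second_order_duals_def by force
  next
    case False
    from unbounded_imp_normalized_subseq[OF this] obtain s e where s: "strict_mono s" "norm e = 1"
      and infty: "filterlim (\<lambda>n. norm (nu (s n))) at_top sequentially"
      and e: "(\<lambda>n. (1 / norm (nu (s n))) *\<^sub>R nu (s n)) \<longlonglongrightarrow> e"
      by blast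
    have "(\<lambda>n. 1 / norm (nu (s n))) \<longlonglongrightarrow> 0"
      using tendsto_inverse_0_at_top[OF infty] by (simp add: divide_inverse)
    from limit[OF s(1) _ this e] obtain zs
      where "e \<in> dnormal D y w" "?L e = 0" "zs \<in> gderiv_normal D y e w" "?L zs = - ?P e"
      by auto
    then have "e = 0"
      by (intro A) simp_all
    with s(2) show ?thesis
      by simp
  qed
qed

lemma asymptotic_limit_in_second_order_duals:
  fixes g :: "'a::euclidean_space \<Rightarrow> 'b::euclidean_space"
    and g' :: "'a \<Rightarrow> ('a \<Rightarrow>\<^sub>L 'b)" and H :: "'a \<Rightarrow>\<^sub>L ('a \<Rightarrow>\<^sub>L 'b)"
  assumes dg: "\<And>x. (g has_derivative blinfun_apply (g' x)) (at x)"
    and d2g: "(g' has_derivative blinfun_apply H) (at xb)"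
    and A: "\<And>ys zs. adjoint (blinfun_apply (g' xb)) ys = 0 \<Longrightarrow>
      adjoint (blinfun_apply (blinfun_apply H u)) ys + adjoint (blinfun_apply (g' xb)) zs = 0 \<Longrightarrow>
      ys \<in> dnormal D (g xb) (blinfun_apply (g' xb) u) \<Longrightarrow>
      zs \<in> gderiv_normal D (g xb) ys (blinfun_apply (g' xb) u) \<Longrightarrow> ys = 0"
    and blowup: "no_normal_blowup (adjoint (blinfun_apply (g' xb))) D (g xb) (blinfun_apply (g' xb) u)"
    and xk: "xk \<longlonglongrightarrow> xb" "\<And>k. xk k \<noteq> xb"
    and dir: "(\<lambda>k. (1 / norm (xk k - xb)) *\<^sub>R (xk k - xb)) \<longlonglongrightarrow> u"
    and yk: "(\<lambda>k. (1 / norm (xk k - xb)) *\<^sub>R yk k) \<longlonglongrightarrow> 0"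
    and cod: "\<And>k. xsk k \<in> rcoderiv {(x, y). g x - y \<in> D} (xk k) (yk k) (lam k)"
    and xsk: "xsk \<longlonglongrightarrow> xs"
  shows "xs \<in> second_order_duals (adjoint (blinfun_apply (g' xb))) (adjoint (blinfun_apply (blinfun_apply H u)))
    D (g xb) (blinfun_apply (g' xb) u)"
proof -
  define t where "t k = norm (xk k - xb)" for k
  define M where "M k = (1 / t k) *\<^sub>R (g' (xk k) - g' xb)" for k
  have t: "t k > 0" for k using xk(2)[of k] by (simp add: t_def)
  have lam: "lam k \<in> rnormal D (g (xk k) - yk k)"
    and xsk_eq: "xsk k = adjoint (blinfun_apply (g' (xk k))) (lam k)" for k
    using cod[of k] rnormal_graph_iff[OF dg] by (simp_all add: rcoderiv_def)
  show ?thesis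
  proof (rule multiplier_limit_in_second_order_duals[OF A blowup t])
    show "t \<longlonglongrightarrow> 0"
      unfolding t_def using tendsto_norm[OF LIM_zero[OF xk(1)]] by simp
    have "(\<lambda>k. (1 / t k) *\<^sub>R (g (xk k) - g xb) - (1 / t k) *\<^sub>R yk k) \<longlonglongrightarrow> blinfun_apply (g' xb) u - 0"
      unfolding t_def by (intro tendsto_diff tendsto_difference_quotient[OF dg xk dir] yk)
    then show "(\<lambda>k. (1 / t k) *\<^sub>R ((g (xk k) - yk k) - g xb)) \<longlonglongrightarrow> blinfun_apply (g' xb) u"
      by (simp add: algebra_simps)
    show "lam k \<in> rnormal D (g (xk k) - yk k)" for k
      by (rule lam)
    show "M \<longlonglongrightarrow> blinfun_apply H u"
      unfolding M_def t_def by (rule tendsto_difference_quotient[OF d2g xk dir])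
    have "g' xb + t k *\<^sub>R M k = g' (xk k)" for k
      using t[of k] by (simp add: M_def)
    then show "(\<lambda>k. adjoint (blinfun_apply (g' xb)) (lam k) + adjoint (blinfun_apply (M k)) (t k *\<^sub>R lam k))
        \<longlonglongrightarrow> xs"
      using xsk by (simp add: adjoint_blinfun_add_scaleR flip: xsk_eq)
  qed
qed

lemma asymp_reg_gen_graph:
  fixes g :: "'a::euclidean_space \<Rightarrow> 'b::euclidean_space"
    and g' :: "'a \<Rightarrow> ('a \<Rightarrow>\<^sub>L 'b)" and H :: "'a \<Rightarrow>\<^sub>L ('a \<Rightarrow>\<^sub>L 'b)"
  assumes dg: "\<And>x. (g has_derivative blinfun_apply (g' x)) (at x)"
    and d2g: "(g' has_derivative blinfun_apply H) (at xb)"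
    and xb: "g xb \<in> D"
    and A: "\<And>ys zs. adjoint (blinfun_apply (g' xb)) ys = 0 \<Longrightarrow>
      adjoint (blinfun_apply (blinfun_apply H u)) ys + adjoint (blinfun_apply (g' xb)) zs = 0 \<Longrightarrow>
      ys \<in> dnormal D (g xb) (blinfun_apply (g' xb) u) \<Longrightarrow>
      zs \<in> gderiv_normal D (g xb) ys (blinfun_apply (g' xb) u) \<Longrightarrow> ys = 0"
    and blowup: "no_normal_blowup (adjoint (blinfun_apply (g' xb))) D (g xb) (blinfun_apply (g' xb) u)"
    and C: "second_order_duals (adjoint (blinfun_apply (g' xb))) (adjoint (blinfun_apply (blinfun_apply H u)))
      D (g xb) (blinfun_apply (g' xb) u) \<subseteq> C"
  shows "asymp_reg_gen {(x, y). g x - y \<in> D} xb 0 u C"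
  unfolding asymp_reg_gen_def
proof (intro allI impI, elim conjE)
  fix xk xsk :: "nat \<Rightarrow> 'a" and yk lam :: "nat \<Rightarrow> 'b" and xs :: 'a
  assume notG: "\<forall>k. (xk k, 0) \<notin> {(x, y). g x - y \<in> D}"
    and cod: "\<forall>k. xsk k \<in> rcoderiv {(x, y). g x - y \<in> D} (xk k) (yk k) (lam k)"
    and lims: "xk \<longlonglongrightarrow> xb" "xsk \<longlonglongrightarrow> xs" "(\<lambda>k. (1 / norm (xk k - xb)) *\<^sub>R (xk k - xb)) \<longlonglongrightarrow> u"
      "(\<lambda>k. (1 / norm (xk k - xb)) *\<^sub>R (yk k - 0)) \<longlonglongrightarrow> 0"
  have "xk k \<noteq> xb" for k
    using notG xb by auto
  moreover have "xsk k \<in> rcoderiv {(x, y). g x - y \<in> D} (xk k) (yk k) (lam k)" for k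
    using cod by blast
  ultimately have "xs \<in> second_order_duals (adjoint (blinfun_apply (g' xb)))
      (adjoint (blinfun_apply (blinfun_apply H u))) D (g xb) (blinfun_apply (g' xb) u)"
    using lims by (intro asymptotic_limit_in_second_order_duals[OF dg d2g A blowup]) simp_all
  with C show "xs \<in> C"
    by blast
qed

lemma lnormal_imp_lcoderiv_graph:
  fixes g :: "'a::euclidean_space \<Rightarrow> 'b::euclidean_space"
  assumes dg: "(g has_derivative g') (at xb)" and l: "l \<in> lnormal D (g xb)"
  shows "adjoint g' l \<in> (\<Union>lam. lcoderiv {(x, y). g x - y \<in> D} xb 0 lam)"
proof -
  have "bounded_linear (adjoint g')"
    using adjoint_linear[OF has_derivative_linear[OF dg]] by (simp add: linear_conv_bounded_linear)
  obtain yk vk where vk: "\<And>k. vk k \<in> rnormal D (yk k)" and "yk \<longlonglongrightarrow> g xb" "vk \<longlonglongrightarrow> l"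
    using l unfolding lnormal_def by blast
  then have "(\<lambda>k. (xb, g xb - yk k)) \<longlonglongrightarrow> (xb, g xb - g xb)"
    by (intro tendsto_Pair tendsto_diff tendsto_const)
  moreover have "(\<lambda>k. (adjoint g' (vk k), - vk k)) \<longlonglongrightarrow> (adjoint g' l, - l)"
    by (intro tendsto_Pair tendsto_minus bounded_linear.tendsto[OF \<open>bounded_linear (adjoint g')\<close>]
        \<open>vk \<longlonglongrightarrow> l\<close>)
  moreover have "(adjoint g' (vk k), - vk k) \<in> rnormal {(x, y). g x - y \<in> D} (xb, g xb - yk k)" for k
    using vk[of k] rnormal_graph_iff[OF dg] by simp
  ultimately have "(adjoint g' l, - l) \<in> lnormal {(x, y). g x - y \<in> D} (xb, 0)"
    unfolding lnormal_def by force
  then show ?thesis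
    unfolding lcoderiv_def by blast
qed

lemma dnormal_imp_dcoderiv_graph:
  fixes g :: "'a::euclidean_space \<Rightarrow> 'b::euclidean_space" and g' :: "'a \<Rightarrow> ('a \<Rightarrow>\<^sub>L 'b)"
  assumes dg: "\<And>x. (g has_derivative blinfun_apply (g' x)) (at x)" and cont: "isCont g' xb"
    and l: "l \<in> dnormal D (g xb) (blinfun_apply (g' xb) u)"
  shows "adjoint (blinfun_apply (g' xb)) l \<in> (\<Union>lam. dcoderiv {(x, y). g x - y \<in> D} xb 0 u 0 lam)"
proof -
  obtain t ws vs where t: "\<And>k. t k > 0" "t \<longlonglongrightarrow> 0" and ws: "ws \<longlonglongrightarrow> blinfun_apply (g' xb) u"
    and vs: "\<And>k. vs k \<in> rnormal D (g xb + t k *\<^sub>R ws k)" "vs \<longlonglongrightarrow> l"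
    using l unfolding dnormal_def by blast
  define xx where "xx k = xb + t k *\<^sub>R u" for k
  have "xx \<longlonglongrightarrow> xb"
    unfolding xx_def using tendsto_add[OF tendsto_const tendsto_scaleR[OF t(2) tendsto_const], of xb u] by simp
  then have "(\<lambda>k. adjoint (blinfun_apply (g' (xx k))) (vs k)) \<longlonglongrightarrow> adjoint (blinfun_apply (g' xb)) l"
    by (intro tendsto_adjoint_blinfun isCont_tendsto_compose[OF cont] vs(2))
  moreover have "(\<lambda>k. (u, (1 / t k) *\<^sub>R (g (xx k) - g xb) - ws k)) \<longlonglongrightarrow> (u, 0)"
    using tendsto_diff[OF tendsto_line_difference_quotient[OF dg t, of xb u] ws]
    by (intro tendsto_Pair) (simp_all add: xx_def)
  moreover have "(adjoint (blinfun_apply (g' (xx k))) (vs k), - vs k)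
      \<in> rnormal {(x, y). g x - y \<in> D} ((xb, 0) + t k *\<^sub>R (u, (1 / t k) *\<^sub>R (g (xx k) - g xb) - ws k))" for k
  proof -
    have pt: "(xb, 0) + t k *\<^sub>R (u, (1 / t k) *\<^sub>R (g (xx k) - g xb) - ws k)
        = (xx k, g (xx k) - (g xb + t k *\<^sub>R ws k))"
      using t(1)[of k] by (simp add: xx_def algebra_simps)
    show ?thesis
      unfolding pt rnormal_graph_iff[OF dg] using vs(1)[of k] by (simp add: add.commute)
  qed
  moreover have "(\<lambda>k. (adjoint (blinfun_apply (g' (xx k))) (vs k), - vs k))
      \<longlonglongrightarrow> (adjoint (blinfun_apply (g' xb)) l, - l)"
    using calculation(1) vs(2) by (intro tendsto_Pair tendsto_minus)
  ultimately have "(adjoint (blinfun_apply (g' xb)) l, - l) \<in> dnormal {(x, y). g x - y \<in> D} (xb, 0) (u, 0)"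
    unfolding dnormal_def using t
    by (intro CollectI exI[of _ t] exI[of _ "\<lambda>k. (u, (1 / t k) *\<^sub>R (g (xx k) - g xb) - ws k)"]
        exI[of _ "\<lambda>k. (adjoint (blinfun_apply (g' (xx k))) (vs k), - vs k)"] conjI allI) auto
  then show ?thesis
    unfolding dcoderiv_def by blast
qed

theorem mainTheorem11:
  fixes g :: "'a::euclidean_space \<Rightarrow> 'b::euclidean_space"
    and g' :: "'a \<Rightarrow> ('a \<Rightarrow>\<^sub>L 'b)"
    and g'' :: "'a \<Rightarrow> ('a \<Rightarrow>\<^sub>L ('a \<Rightarrow>\<^sub>L 'b))"
    and D :: "'b set" and xb u :: 'a
  assumes dg: "\<And>x. (g has_derivative blinfun_apply (g' x)) (at x)"
    and d2g: "\<And>x. (g' has_derivative blinfun_apply (g'' x)) (at x)"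
    and cont: "continuous_on UNIV g''"
    and closedD: "closed D"
    and ingph: "g xb \<in> D"
    and unit: "norm u = 1"
    and A: "\<And>ys zs. adjoint (blinfun_apply (g' xb)) ys = 0 \<Longrightarrow>
             adjoint (blinfun_apply (blinfun_apply (g'' xb) u)) ys + adjoint (blinfun_apply (g' xb)) zs = 0 \<Longrightarrow>
             ys \<in> dnormal D (g xb) (blinfun_apply (g' xb) u) \<Longrightarrow>
             zs \<in> gderiv_normal D (g xb) ys (blinfun_apply (g' xb) u) \<Longrightarrow> ys = 0"
    and B: "(\<forall>ys zh. adjoint (blinfun_apply (g' xb)) ys = 0 \<and> adjoint (blinfun_apply (g' xb)) zh = 0 \<and>
               ys \<in> dnormal D (g xb) (blinfun_apply (g' xb) u) \<and>
               zh \<in> gderiv_normal D (g xb) ys 0 \<longrightarrow> zh = 0)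
          \<or> (blinfun_apply (g' xb) u \<noteq> 0 \<and>
             (\<forall>ys zh. adjoint (blinfun_apply (g' xb)) ys = 0 \<and> adjoint (blinfun_apply (g' xb)) zh = 0 \<and>
               ys \<in> dnormal D (g xb) (blinfun_apply (g' xb) u) \<longrightarrow>
               zh \<notin> gsubderiv (gph_normal D) (g xb) ys
                      ((1 / norm (blinfun_apply (g' xb) u)) *\<^sub>R blinfun_apply (g' xb) u)))"
  shows "((\<forall>xs ys zs. xs = adjoint (blinfun_apply (blinfun_apply (g'' xb) u)) ys + adjoint (blinfun_apply (g' xb)) zs \<and>
              ys \<in> dnormal D (g xb) (blinfun_apply (g' xb) u) \<and> adjoint (blinfun_apply (g' xb)) ys = 0 \<and>
              zs \<in> gderiv_normal D (g xb) ys (blinfun_apply (g' xb) u)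
            \<longrightarrow> (\<exists>lam \<in> lnormal D (g xb). xs = adjoint (blinfun_apply (g' xb)) lam))
          \<longrightarrow> asymp_regular {(x, y). g x - y \<in> D} xb 0 u)
       \<and> ((\<forall>xs ys zs. xs = adjoint (blinfun_apply (blinfun_apply (g'' xb) u)) ys + adjoint (blinfun_apply (g' xb)) zs \<and>
              ys \<in> dnormal D (g xb) (blinfun_apply (g' xb) u) \<and> adjoint (blinfun_apply (g' xb)) ys = 0 \<and>
              zs \<in> gderiv_normal D (g xb) ys (blinfun_apply (g' xb) u)
            \<longrightarrow> (\<exists>lam \<in> dnormal D (g xb) (blinfun_apply (g' xb) u). xs = adjoint (blinfun_apply (g' xb)) lam))
          \<longrightarrow> strong_asymp_regular {(x, y). g x - y \<in> D} xb 0 u)"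
proof -
  let ?G = "{(x, y). g x - y \<in> D}"
  let ?L = "adjoint (blinfun_apply (g' xb))" and ?w = "blinfun_apply (g' xb) u"
  let ?S = "second_order_duals ?L (adjoint (blinfun_apply (blinfun_apply (g'' xb) u))) D (g xb) ?w"
  have blowup: "no_normal_blowup ?L D (g xb) ?w"
    using B by (rule no_normal_blowupI)
  have reg: "?S \<subseteq> C \<Longrightarrow> asymp_reg_gen ?G xb 0 u C" for C
    by (rule asymp_reg_gen_graph[OF dg d2g ingph A blowup])
  have "isCont g' xb"
    using has_derivative_continuous[OF d2g] .
  then have "?L ` dnormal D (g xb) ?w \<subseteq> (\<Union>lam. dcoderiv ?G xb 0 u 0 lam)"
    by (auto intro: dnormal_imp_dcoderiv_graph[OF dg])
  have "?L ` lnormal D (g xb) \<subseteq> (\<Union>lam. lcoderiv ?G xb 0 lam)"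
    by (auto intro: lnormal_imp_lcoderiv_graph[OF dg])
  show ?thesis
    unfolding asymp_regular_def strong_asymp_regular_def
    by (intro conjI impI; rule reg; erule subset_trans[OF second_order_duals_subsetI]; fact)
qed

end
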